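(* Let $n\ge4$, $\mu_1,\mu_2,\beta>0$, $p=2q+1$ with $\frac{n}{n-2}<p<\frac{n+2}{n-2}$, and let $(w_1,w_2)$ be a nonnegative $C^2$ solution on $\mathbb{R}$ of $$w_1''+\tau w_1'-\sigma w_1+\mu_1w_1^{2q+1}+\beta w_1^qw_2^{q+1}=0,\qquad w_2''+\tau w_2'-\sigma w_2+\mu_2w_2^{2q+1}+\beta w_2^qw_1^{q+1}=0.$$ If $\liminf_{t\to+\infty}w_1(t)=\liminf_{t\to+\infty}w_2(t)=0$, then $\liminf_{t\to+\infty}(w_1+w_2)(t)=0$.
   Context: $\tau=\frac4{p-1}-n+2$, $\sigma=\frac2{p-1}\big(n-2-\frac2{p-1}\big)$; both are positive in the stated range of $p$. *)

theory Defs
  imports "HOL-Analysis.Analysis"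
begin

definition C2_real :: "(real \<Rightarrow> real) \<Rightarrow> bool" where
  "C2_real f \<longleftrightarrow> (\<forall>t. f differentiable (at t)) \<and> (\<forall>t. deriv f differentiable (at t))
      \<and> continuous_on UNIV (deriv (deriv f))"

definition tau_c :: "nat \<Rightarrow> real \<Rightarrow> real" where
  "tau_c n p = 4 / (p - 1) - real n + 2"

definition sigma_c :: "nat \<Rightarrow> real \<Rightarrow> real" where
  "sigma_c n p = 2 / (p - 1) * (real n - 2 - 2 / (p - 1))"

end

theory Submission
  imports Defs "HOL-Analysis.Analysis"
begin

text \<open>Suppose \<open>w\<^sub>1 + w\<^sub>2 > 2c > 0\<close> for large \<open>t\<close>. Where \<open>w\<^sub>1\<close> is small, \<open>w\<^sub>2 > c\<close>, and since
  \<open>q < 1\<close> the coupling term \<open>\<beta> w\<^sub>1\<^sup>q w\<^sub>2\<^sup>q\<^sup>+\<^sup>1\<close> dominates \<open>\<sigma> w\<^sub>1\<close>; hence below a small level \<open>\<eta>\<close>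
  we get \<open>w\<^sub>1'' + \<tau> w\<^sub>1' \<le> 0\<close>, i.e. \<open>e\<^sup>\<tau>\<^sup>t w\<^sub>1'\<close> is nonincreasing there. As \<open>liminf w\<^sub>1 = 0\<close>,
  either \<open>w\<^sub>1\<close> eventually stays below \<open>\<eta>\<close>, forcing \<open>w\<^sub>2 > c\<close> and contradicting
  \<open>liminf w\<^sub>2 = 0\<close>, or \<open>w\<^sub>1\<close> dips below \<open>\<eta>\<close> between two points where it is \<open>\<ge> \<eta>\<close>; inside
  that valley \<open>w\<^sub>1'\<close> changes sign from negative to positive, which the monotonicity of
  \<open>e\<^sup>\<tau>\<^sup>t w\<^sub>1'\<close> forbids.\<close>

lemma frequently_less_if_Liminf_eq_0:
  fixes w :: "real \<Rightarrow> real"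
  assumes "Liminf at_top (\<lambda>t. ereal (w t)) = 0" "\<epsilon> > 0"
  shows "\<exists>\<^sub>F t in at_top. w t < \<epsilon>"
proof (rule ccontr)
  assume "\<not> (\<exists>\<^sub>F t in at_top. w t < \<epsilon>)"
  hence "\<forall>\<^sub>F t in at_top. ereal \<epsilon> \<le> ereal (w t)"
    by (simp add: not_frequently not_less)
  hence "ereal \<epsilon> \<le> Liminf at_top (\<lambda>t. ereal (w t))" by (rule Liminf_bounded)
  with assms show False by simp
qed

lemma eventually_gt_if_Liminf_pos:
  fixes w :: "real \<Rightarrow> real"
  assumes "0 < Liminf at_top (\<lambda>t. ereal (w t))"
  obtains c where "c > 0" "\<forall>\<^sub>F t in at_top. w t > c"
proof -
  obtain r where "0 < ereal r" "ereal r < Liminf at_top (\<lambda>t. ereal (w t))"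
    using ereal_dense2[OF assms] by blast
  with less_LiminfD[of r] that[of r] show ?thesis by force
qed

text \<open>The exponent \<open>q < 1\<close> is what makes \<open>x\<^sup>q\<close> beat \<open>\<sigma> x\<close> for small \<open>x\<close>.\<close>

lemma reaction_term_nonpos_near_0:
  fixes \<sigma> \<mu> \<beta> c q :: real
  assumes "0 < q" "q < 1" "\<mu> \<ge> 0" "\<beta> > 0" "c > 0"
  obtains \<eta> where "\<eta> > 0"
    "\<And>x y. 0 \<le> x \<Longrightarrow> x < \<eta> \<Longrightarrow> c \<le> y \<Longrightarrow>
       \<sigma> * x - \<mu> * x powr (2 * q + 1) - \<beta> * x powr q * y powr (q + 1) \<le> 0"
proof
  define K where "K = max \<sigma> 1"
  have K: "K > 0" "\<sigma> \<le> K" unfolding K_def by auto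
  define \<eta> where "\<eta> = (\<beta> * c powr (q + 1) / K) powr (1 / (1 - q))"
  show "\<eta> > 0" unfolding \<eta>_def using assms K by simp
  have \<eta>_powr: "\<eta> powr (1 - q) = \<beta> * c powr (q + 1) / K"
    unfolding \<eta>_def using assms K by (simp add: powr_powr)
  fix x y :: real
  assume x: "0 \<le> x" "x < \<eta>" and y: "c \<le> y"
  have "\<sigma> * x \<le> \<beta> * x powr q * y powr (q + 1)"
  proof (cases "x = 0")
    case False
    hence "x > 0" using x by simp
    have "\<sigma> * x \<le> K * (x powr q * x powr (1 - q))"
      using K x \<open>x > 0\<close> by (simp add: powr_add[symmetric] mult_right_mono)
    also have "\<dots> \<le> K * (x powr q * \<eta> powr (1 - q))"
      using K x assms by (intro mult_left_mono powr_mono2) auto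
    also have "\<dots> = \<beta> * x powr q * c powr (q + 1)"
      using K by (simp add: \<eta>_powr)
    also have "\<dots> \<le> \<beta> * x powr q * y powr (q + 1)"
      using assms y by (intro mult_left_mono powr_mono2) auto
    finally show ?thesis .
  qed simp
  moreover have "\<mu> * x powr (2 * q + 1) \<ge> 0" using assms by simp
  ultimately show "\<sigma> * x - \<mu> * x powr (2 * q + 1) - \<beta> * x powr q * y powr (q + 1) \<le> 0"
    by linarith
qed

lemma last_crossing_before:
  fixes f :: "real \<Rightarrow> real"
  assumes "continuous_on {a..s} f" "a \<le> s" "f a \<ge> \<eta>" "f s < \<eta>"
  obtains a' where "a \<le> a'" "a' < s" "f a' \<ge> \<eta>" "\<And>t. a' < t \<Longrightarrow> t \<le> s \<Longrightarrow> f t < \<eta>"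
proof -
  let ?S = "{a..s} \<inter> f -` {\<eta>..}"
  have "closed ?S" by (rule continuous_closed_preimage) (use assms in auto)
  hence "compact ?S" using compact_Int_closed[OF compact_Icc] by (metis Int_assoc inf.idem)
  moreover have "a \<in> ?S" using assms by auto
  ultimately obtain m where m: "m \<in> ?S" "\<forall>t\<in>?S. t \<le> m" using compact_attains_sup by blast
  show ?thesis
  proof (rule that[of m])
    show "m < s" using m assms by (force simp: order_le_less)
    show "f t < \<eta>" if "m < t" "t \<le> s" for t
      using m that \<open>m < s\<close> by (auto simp flip: not_le)
  qed (use m in auto)
qed

lemma first_crossing_after:
  fixes f :: "real \<Rightarrow> real"
  assumes "continuous_on {s..b} f" "s \<le> b" "f b \<ge> \<eta>" "f s < \<eta>"
  obtains b' where "s < b'" "b' \<le> b" "f b' \<ge> \<eta>" "\<And>t. s \<le> t \<Longrightarrow> t < b' \<Longrightarrow> f t < \<eta>"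
proof -
  let ?S = "{s..b} \<inter> f -` {\<eta>..}"
  have "closed ?S" by (rule continuous_closed_preimage) (use assms in auto)
  hence "compact ?S" using compact_Int_closed[OF compact_Icc] by (metis Int_assoc inf.idem)
  moreover have "b \<in> ?S" using assms by auto
  ultimately obtain m where m: "m \<in> ?S" "\<forall>t\<in>?S. m \<le> t" using compact_attains_inf by blast
  show ?thesis
  proof (rule that[of m])
    show "s < m" using m assms by (force simp: order_le_less)
    show "f t < \<eta>" if "s \<le> t" "t < m" for t
      using m that \<open>s < m\<close> by (auto simp flip: not_le)
  qed (use m in auto)
qed

lemma valley_derivative_signs:
  fixes f f' :: "real \<Rightarrow> real"
  assumes f': "\<And>t. (f has_real_derivative f' t) (at t)"
    and "a \<le> s" "s \<le> b" "f a \<ge> \<eta>" "f s < \<eta>" "f b \<ge> \<eta>"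
  obtains u v where "a < u" "u < v" "v < b" "f' u < 0" "f' v > 0"
    "\<And>t. u \<le> t \<Longrightarrow> t \<le> v \<Longrightarrow> f t < \<eta>"
proof -
  have cont: "continuous_on S f" for S
    using f' by (meson DERIV_isCont continuous_at_imp_continuous_on)
  obtain a' where a': "a \<le> a'" "a' < s" "f a' \<ge> \<eta>" "\<And>t. a' < t \<Longrightarrow> t \<le> s \<Longrightarrow> f t < \<eta>"
    using last_crossing_before[OF cont] assms by metis
  obtain b' where b': "s < b'" "b' \<le> b" "f b' \<ge> \<eta>" "\<And>t. s \<le> t \<Longrightarrow> t < b' \<Longrightarrow> f t < \<eta>"
    using first_crossing_after[OF cont] assms by metis
  obtain u where u: "a' < u" "u < s" "f s - f a' = (s - a') * f' u"
    using MVT2[OF a'(2), of f f'] f' by blast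
  obtain v where v: "s < v" "v < b'" "f b' - f s = (b' - s) * f' v"
    using MVT2[OF b'(1), of f f'] f' by blast
  have "f' u < 0" using u a' assms by (smt (verit) mult_nonneg_nonneg)
  moreover have "f' v > 0" using v b' assms by (smt (verit) mult_nonneg_nonpos)
  moreover have "f t < \<eta>" if "u \<le> t" "t \<le> v" for t
    using a'(4) b'(4) u v that by (cases "t \<le> s") auto
  ultimately show ?thesis
    using that[of u v] u(1) v(2) a'(1) b'(2) u(2) v(1) by force
qed

lemma integrating_factor_antimono:
  fixes f' f'' :: "real \<Rightarrow> real"
  assumes f'': "\<And>t. (f' has_real_derivative f'' t) (at t)"
    and "u \<le> v" and sup: "\<And>t. u \<le> t \<Longrightarrow> t \<le> v \<Longrightarrow> f'' t + \<tau> * f' t \<le> 0"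
  shows "exp (\<tau> * v) * f' v \<le> exp (\<tau> * u) * f' u"
proof -
  let ?g = "\<lambda>t. exp (\<tau> * t) * f' t"
  have "(?g has_real_derivative exp (\<tau> * t) * (f'' t + \<tau> * f' t)) (at t)" for t
    by (rule derivative_eq_intros f'' refl | simp add: algebra_simps)+
  moreover have "exp (\<tau> * t) * (f'' t + \<tau> * f' t) \<le> 0" if "u \<le> t" "t \<le> v" for t
    using sup[OF that] by (simp add: mult_nonneg_nonpos)
  ultimately show ?thesis
    using DERIV_nonpos_imp_nonincreasing[OF \<open>u \<le> v\<close>] by blast
qed

lemma eventually_below_or_above_if_supersolution_below:
  fixes f f' f'' :: "real \<Rightarrow> real"
  assumes f': "\<And>t. (f has_real_derivative f' t) (at t)"
    and f'': "\<And>t. (f' has_real_derivative f'' t) (at t)"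
    and sup: "\<And>t. t \<ge> T \<Longrightarrow> f t < \<eta> \<Longrightarrow> f'' t + \<tau> * f' t \<le> 0"
  shows "(\<forall>\<^sub>F t in at_top. f t < \<eta>) \<or> (\<forall>\<^sub>F t in at_top. f t \<ge> \<eta>)"
proof (rule ccontr)
  assume "\<not> ?thesis"
  hence above: "\<forall>T. \<exists>t\<ge>T. f t \<ge> \<eta>" and below: "\<forall>T. \<exists>t\<ge>T. f t < \<eta>"
    unfolding eventually_at_top_linorder by (meson not_le)+
  obtain a where a: "a \<ge> T" "f a \<ge> \<eta>" using above by blast
  obtain s where s: "s \<ge> a" "f s < \<eta>" using below by blast
  obtain b where b: "b \<ge> s" "f b \<ge> \<eta>" using above by blast
  obtain u v where uv: "a < u" "u < v" "f' u < 0" "f' v > 0"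
    and "\<And>t. u \<le> t \<Longrightarrow> t \<le> v \<Longrightarrow> f t < \<eta>"
    using valley_derivative_signs[OF f' s(1) b(1) a(2) s(2) b(2)] by metis
  with a sup have "exp (\<tau> * v) * f' v \<le> exp (\<tau> * u) * f' u"
    by (intro integrating_factor_antimono[OF f'']) auto
  with uv show False by (smt (verit) exp_gt_zero mult_pos_neg mult_pos_pos)
qed

lemma half_exponent_between_0_1:
  fixes n :: nat and q :: real
  assumes "n \<ge> 4" "real n / (real n - 2) < 2 * q + 1" "2 * q + 1 < (real n + 2) / (real n - 2)"
  shows "0 < q" "q < 1"
proof -
  have "real n / (real n - 2) > 1" "(real n + 2) / (real n - 2) \<le> 3"
    using assms(1) by (simp_all add: field_simps)
  with assms(2,3) show "0 < q" "q < 1" by linarith+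
qed

lemma C2_real_has_derivatives:
  assumes "C2_real w"
  shows "(w has_real_derivative deriv w t) (at t)"
    "(deriv w has_real_derivative deriv (deriv w) t) (at t)"
  using assms unfolding C2_real_def by (simp_all add: DERIV_deriv_iff_real_differentiable)

theorem lemma4p3:
  fixes n :: nat and \<mu>1 \<mu>2 \<beta> q p :: real and w1 w2 :: "real \<Rightarrow> real"
  assumes "n \<ge> 4"
    and "\<mu>1 > 0" and "\<mu>2 > 0" and "\<beta> > 0"
    and "p = 2 * q + 1"
    and "real n / (real n - 2) < p" and "p < (real n + 2) / (real n - 2)"
    and "\<forall>t. w1 t \<ge> 0" and "\<forall>t. w2 t \<ge> 0"
    and "C2_real w1" and "C2_real w2"
    and "\<forall>t. deriv (deriv w1) t + tau_c n p * deriv w1 t - sigma_c n p * w1 t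
              + \<mu>1 * w1 t powr (2 * q + 1) + \<beta> * w1 t powr q * w2 t powr (q + 1) = 0"
    and "\<forall>t. deriv (deriv w2) t + tau_c n p * deriv w2 t - sigma_c n p * w2 t
              + \<mu>2 * w2 t powr (2 * q + 1) + \<beta> * w2 t powr q * w1 t powr (q + 1) = 0"
    and "Liminf at_top (\<lambda>t. ereal (w1 t)) = 0"
    and "Liminf at_top (\<lambda>t. ereal (w2 t)) = 0"
  shows "Liminf at_top (\<lambda>t. ereal (w1 t + w2 t)) = 0"
proof (rule ccontr)
  have q: "0 < q" "q < 1" using half_exponent_between_0_1 assms(1,5-7) by auto
  assume "Liminf at_top (\<lambda>t. ereal (w1 t + w2 t)) \<noteq> 0"
  moreover have "0 \<le> Liminf at_top (\<lambda>t. ereal (w1 t + w2 t))"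
    using assms(8,9) by (intro Liminf_bounded) auto
  ultimately obtain c2 where "c2 > 0" and "\<forall>\<^sub>F t in at_top. w1 t + w2 t > c2"
    using eventually_gt_if_Liminf_pos by (metis order_le_neq_trans)
  then obtain T where T: "\<And>t. t \<ge> T \<Longrightarrow> w1 t + w2 t > c2"
    unfolding eventually_at_top_linorder by metis
  define c where "c = c2 / 2"
  have "c > 0" using \<open>c2 > 0\<close> c_def by simp
  obtain \<eta>0 where "\<eta>0 > 0" and reaction: "\<And>x y. 0 \<le> x \<Longrightarrow> x < \<eta>0 \<Longrightarrow> c \<le> y \<Longrightarrow>
      sigma_c n p * x - \<mu>1 * x powr (2 * q + 1) - \<beta> * x powr q * y powr (q + 1) \<le> 0"
    using reaction_term_nonpos_near_0[OF q] assms(2,4) \<open>c > 0\<close> by (metis less_imp_le)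
  define \<eta> where "\<eta> = min \<eta>0 c"
  have w2_big: "w2 t > c" if "t \<ge> T" "w1 t < \<eta>" for t
    using T[OF that(1)] that(2) c_def \<eta>_def by linarith
  have "deriv (deriv w1) t + tau_c n p * deriv w1 t \<le> 0" if "t \<ge> T" "w1 t < \<eta>" for t
  proof -
    have "sigma_c n p * w1 t - \<mu>1 * w1 t powr (2 * q + 1) - \<beta> * w1 t powr q * w2 t powr (q + 1) \<le> 0"
      using reaction[of "w1 t" "w2 t"] w2_big[OF that] that(2) assms(8) \<eta>_def by force
    with assms(12) show ?thesis by (smt (verit))
  qed
  then have "(\<forall>\<^sub>F t in at_top. w1 t < \<eta>) \<or> (\<forall>\<^sub>F t in at_top. w1 t \<ge> \<eta>)"
    using C2_real_has_derivatives[OF assms(10)]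
    by (intro eventually_below_or_above_if_supersolution_below) auto
  moreover have "\<eta> > 0" using \<open>\<eta>0 > 0\<close> \<open>c > 0\<close> \<eta>_def by simp
  then have "\<not> (\<forall>\<^sub>F t in at_top. w1 t \<ge> \<eta>)"
    using frequently_less_if_Liminf_eq_0[OF assms(14)] by (simp add: not_eventually not_le)
  ultimately have "\<forall>\<^sub>F t in at_top. w1 t < \<eta>" by blast
  hence "\<forall>\<^sub>F t in at_top. w2 t \<ge> c"
    using eventually_ge_at_top[of T] by eventually_elim (use w2_big in force)
  moreover have "\<not> (\<forall>\<^sub>F t in at_top. w2 t \<ge> c)"
    using frequently_less_if_Liminf_eq_0[OF assms(15) \<open>c > 0\<close>] by (simp add: not_eventually not_le)
  ultimately show False by blast
qed

end
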